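(* Let $T$ be a left regular near-truss without an absorber. Then $\mathrm{Q}(T)$ is a brace-type near-truss; that is, for all $b\in T$, the retract of $\mathrm{Q}(T)$ at $\frac{b}{b}$, together with the multiplication of fractions $\frac{a}{b}\cdot\frac{a'}{b'}=\frac{\gamma a'}{\gamma' b}$ (where $\gamma,\gamma'\in T$ satisfy $\gamma b'=\gamma' a$), is a skew brace.
   Context: A heap is a set with a ternary operation $[-,-,-]$ satisfying $[a_1,a_2,[a_3,a_4,a_5]]=[[a_1,a_2,a_3],a_4,a_5]$ and $[a,a,b]=b=[b,a,a]$; its retract at $e$ is the group with operation $x+_ey=[x,e,y]$. A pre-truss is a heap with an associative multiplication; a near-truss additionally satisfies $a[b,c,d]=[ab,ac,ad]$. An absorber is $z$ with $tz=z=zt$ for all $t$. $T$ is a domain if for every $a\in T$ that is not an absorber and all $b\neq c$, $ab\neq ac$ and $ba\neq ca$; $T$ is left regular if it is a domain and for all non-absorbers $x,y$ there exist non-absorbers $r,s$ with $rx=sy$. $\mathrm{Q}(T)$ is the set of classes $\frac{a}{b}$ of pairs $(b,a)$, $b$ not an absorber, under $(b,a)\sim(b',a')$ iff $\beta b=\beta'b'$ and $\beta a=\beta'a'$ for some non-absorbers $\beta,\beta'$, with heap operation $\left[\frac{a}{b},\frac{a'}{b'},\frac{a''}{b''}\right]=\frac{[\beta_1a,\beta_2a',\beta_3a'']}{\beta_1b}$ for non-absorbers with $\beta_1b=\beta_2b'=\beta_3b''$, and the multiplication above; this is a well-defined near-truss. A near-truss is brace-type if its multiplication is a group. A skew brace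 is a triple $(B,+,\cdot)$ with $(B,+)$ and $(B,\cdot)$ groups and $a(b+c)=ab-a+ac$. *)

theory Defs
  imports "HOL-Algebra.Group"
begin

definition is_heap :: "'a set \<Rightarrow> ('a \<Rightarrow> 'a \<Rightarrow> 'a \<Rightarrow> 'a) \<Rightarrow> bool" where
  "is_heap A h \<longleftrightarrow>
     (\<forall>a\<in>A. \<forall>b\<in>A. \<forall>c\<in>A. h a b c \<in> A) \<and>
     (\<forall>a1\<in>A. \<forall>a2\<in>A. \<forall>a3\<in>A. \<forall>a4\<in>A. \<forall>a5\<in>A.
        h a1 a2 (h a3 a4 a5) = h (h a1 a2 a3) a4 a5) \<and>
     (\<forall>a\<in>A. \<forall>b\<in>A. h a a b = b \<and> h b a a = b)"

definition near_truss :: "'a set \<Rightarrow> ('a \<Rightarrow> 'a \<Rightarrow> 'a \<Rightarrow> 'a) \<Rightarrow> ('a \<Rightarrow> 'a \<Rightarrow> 'a) \<Rightarrow> bool" where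
  "near_truss A h m \<longleftrightarrow> is_heap A h \<and>
     (\<forall>a\<in>A. \<forall>b\<in>A. m a b \<in> A) \<and>
     (\<forall>a\<in>A. \<forall>b\<in>A. \<forall>c\<in>A. m (m a b) c = m a (m b c)) \<and>
     (\<forall>a\<in>A. \<forall>b\<in>A. \<forall>c\<in>A. \<forall>d\<in>A. m a (h b c d) = h (m a b) (m a c) (m a d))"

definition absorber :: "'a set \<Rightarrow> ('a \<Rightarrow> 'a \<Rightarrow> 'a) \<Rightarrow> 'a \<Rightarrow> bool" where
  "absorber A m z \<longleftrightarrow> z \<in> A \<and> (\<forall>t\<in>A. m t z = z \<and> m z t = z)"

definition is_domain :: "'a set \<Rightarrow> ('a \<Rightarrow> 'a \<Rightarrow> 'a) \<Rightarrow> bool" where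
  "is_domain A m \<longleftrightarrow>
     (\<forall>a\<in>A. \<not> absorber A m a \<longrightarrow>
        (\<forall>b\<in>A. \<forall>c\<in>A. b \<noteq> c \<longrightarrow> m a b \<noteq> m a c \<and> m b a \<noteq> m c a))"

definition left_regular :: "'a set \<Rightarrow> ('a \<Rightarrow> 'a \<Rightarrow> 'a) \<Rightarrow> bool" where
  "left_regular A m \<longleftrightarrow> is_domain A m \<and>
     (\<forall>x\<in>A. \<forall>y\<in>A. \<not> absorber A m x \<longrightarrow> \<not> absorber A m y \<longrightarrow>
        (\<exists>r\<in>A. \<exists>s\<in>A. \<not> absorber A m r \<and> \<not> absorber A m s \<and> m r x = m s y))"

section \<open>The near-truss of fractions Q(T); the fraction a/b is the class of the pair (b,a)\<close>

definition frac_pairs :: "'a set \<Rightarrow> ('a \<Rightarrow> 'a \<Rightarrow> 'a) \<Rightarrow> ('a \<times> 'a) set" where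
  "frac_pairs A m = {(b, a). b \<in> A \<and> a \<in> A \<and> \<not> absorber A m b}"

definition frac_rel :: "'a set \<Rightarrow> ('a \<Rightarrow> 'a \<Rightarrow> 'a) \<Rightarrow> (('a \<times> 'a) \<times> ('a \<times> 'a)) set" where
  "frac_rel A m = {((b, a), (b', a')). (b, a) \<in> frac_pairs A m \<and> (b', a') \<in> frac_pairs A m \<and>
     (\<exists>\<beta>\<in>A. \<exists>\<beta>'\<in>A. \<not> absorber A m \<beta> \<and> \<not> absorber A m \<beta>' \<and>
        m \<beta> b = m \<beta>' b' \<and> m \<beta> a = m \<beta>' a')}"

definition frac :: "'a set \<Rightarrow> ('a \<Rightarrow> 'a \<Rightarrow> 'a) \<Rightarrow> 'a \<Rightarrow> 'a \<Rightarrow> ('a \<times> 'a) set" where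
  "frac A m a b = frac_rel A m `` {(b, a)}"

definition Q :: "'a set \<Rightarrow> ('a \<Rightarrow> 'a \<Rightarrow> 'a) \<Rightarrow> ('a \<times> 'a) set set" where
  "Q A m = frac_pairs A m // frac_rel A m"

definition Q_heap :: "'a set \<Rightarrow> ('a \<Rightarrow> 'a \<Rightarrow> 'a \<Rightarrow> 'a) \<Rightarrow> ('a \<Rightarrow> 'a \<Rightarrow> 'a)
    \<Rightarrow> ('a \<times> 'a) set \<Rightarrow> ('a \<times> 'a) set \<Rightarrow> ('a \<times> 'a) set \<Rightarrow> ('a \<times> 'a) set" where
  "Q_heap A h m X Y Z = (THE W. \<exists>b a b' a' b'' a'' \<beta>1 \<beta>2 \<beta>3.
     (b, a) \<in> X \<and> (b', a') \<in> Y \<and> (b'', a'') \<in> Z \<and>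
     \<beta>1 \<in> A \<and> \<beta>2 \<in> A \<and> \<beta>3 \<in> A \<and>
     \<not> absorber A m \<beta>1 \<and> \<not> absorber A m \<beta>2 \<and> \<not> absorber A m \<beta>3 \<and>
     m \<beta>1 b = m \<beta>2 b' \<and> m \<beta>2 b' = m \<beta>3 b'' \<and>
     W = frac A m (h (m \<beta>1 a) (m \<beta>2 a') (m \<beta>3 a'')) (m \<beta>1 b))"

definition Q_mul :: "'a set \<Rightarrow> ('a \<Rightarrow> 'a \<Rightarrow> 'a)
    \<Rightarrow> ('a \<times> 'a) set \<Rightarrow> ('a \<times> 'a) set \<Rightarrow> ('a \<times> 'a) set" where
  "Q_mul A m X Y = (THE W. \<exists>b a b' a' \<gamma> \<gamma>'.
     (b, a) \<in> X \<and> (b', a') \<in> Y \<and> \<gamma> \<in> A \<and> \<gamma>' \<in> A \<and>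
     m \<gamma> b' = m \<gamma>' a \<and>
     W = frac A m (m \<gamma> a') (m \<gamma>' b))"

definition retract :: "('b \<Rightarrow> 'b \<Rightarrow> 'b \<Rightarrow> 'b) \<Rightarrow> 'b \<Rightarrow> 'b \<Rightarrow> 'b \<Rightarrow> 'b" where
  "retract h e x y = h x e y"

definition skew_brace :: "'b set \<Rightarrow> ('b \<Rightarrow> 'b \<Rightarrow> 'b) \<Rightarrow> ('b \<Rightarrow> 'b \<Rightarrow> 'b) \<Rightarrow> bool" where
  "skew_brace B add mul \<longleftrightarrow> (\<exists>z u.
     group \<lparr>carrier = B, monoid.mult = add, one = z\<rparr> \<and>
     group \<lparr>carrier = B, monoid.mult = mul, one = u\<rparr> \<and>
     (\<forall>a\<in>B. \<forall>b\<in>B. \<forall>c\<in>B.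
        mul a (add b c) =
          add (add (mul a b) (inv\<^bsub>\<lparr>carrier = B, monoid.mult = add, one = z\<rparr>\<^esub> a)) (mul a c)))"

end

theory Submission
  imports Defs
begin

text \<open>Without absorbers, left regularity is a left Ore condition for the whole multiplicative
  semigroup, so finitely many fractions can be brought to a common denominator, where the heap
  operation of Q(T) acts on numerators; the heap axioms and left distributivity thus descend
  from T. Likewise any two fractions can be written as tc/p and te/tc, and their product
  telescopes to te/p; hence b/b is neutral, q/p has inverse p/q, and Q(T) is brace-type.
  Finally, in a near-truss whose multiplication is a group with neutral element u, left
  distributivity a[b,u,c] = [ab,a,ac] is the skew brace law in the retract at u, because
  [x,a,y] = x - a + y there.\<close>

locale heap =
  fixes B :: "'b set" and H :: "'b \<Rightarrow> 'b \<Rightarrow> 'b \<Rightarrow> 'b"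
  assumes is_heap: "is_heap B H"
begin

lemma heap_closed: "\<lbrakk>x \<in> B; y \<in> B; z \<in> B\<rbrakk> \<Longrightarrow> H x y z \<in> B"
  using is_heap by (simp add: is_heap_def)

lemma heap_assoc:
  "\<lbrakk>x1 \<in> B; x2 \<in> B; x3 \<in> B; x4 \<in> B; x5 \<in> B\<rbrakk> \<Longrightarrow> H x1 x2 (H x3 x4 x5) = H (H x1 x2 x3) x4 x5"
  using is_heap by (simp add: is_heap_def)

lemma heap_cancel_left: "\<lbrakk>x \<in> B; y \<in> B\<rbrakk> \<Longrightarrow> H x x y = y"
  using is_heap by (simp add: is_heap_def)

lemma heap_cancel_right: "\<lbrakk>x \<in> B; y \<in> B\<rbrakk> \<Longrightarrow> H y x x = y"
  using is_heap by (simp add: is_heap_def)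

lemma group_retract:
  assumes e: "e \<in> B"
  shows "group \<lparr>carrier = B, monoid.mult = retract H e, one = e\<rparr>"
proof (rule groupI; simp add: retract_def)
  fix x assume "x \<in> B"
  then show "\<exists>y\<in>B. H y e x = e"
    using e by (intro bexI[of _ "H e x e"])
      (simp_all add: heap_closed heap_assoc[symmetric] heap_cancel_left heap_cancel_right)
qed (use e in \<open>simp_all add: heap_closed heap_assoc heap_cancel_left\<close>)

lemma retract_inv:
  assumes e: "e \<in> B" and x: "x \<in> B"
  shows "inv\<^bsub>\<lparr>carrier = B, monoid.mult = retract H e, one = e\<rparr>\<^esub> x = H e x e"
proof -
  interpret group "\<lparr>carrier = B, monoid.mult = retract H e, one = e\<rparr>"
    using e by (rule group_retract)
  show ?thesis
    using e x by (intro inv_equality)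
      (simp_all add: retract_def heap_closed heap_assoc[symmetric] heap_cancel_left heap_cancel_right)
qed

lemma heap_eq_retract:
  assumes "x \<in> B" "a \<in> B" "y \<in> B" "e \<in> B"
  shows "H x a y = retract H e (retract H e x (H e a e)) y"
proof -
  have "H x e (H e a e) = H x a e"
    using assms by (simp add: heap_assoc heap_cancel_right)
  then have "retract H e (retract H e x (H e a e)) y = H (H x a e) e y"
    by (simp add: retract_def)
  also have "\<dots> = H x a y"
    using assms by (simp add: heap_assoc[symmetric] heap_cancel_left)
  finally show ?thesis ..
qed

end

lemma skew_brace_of_brace_type_near_truss:
  assumes near_truss: "near_truss B H M"
    and brace_type: "group \<lparr>carrier = B, monoid.mult = M, one = u\<rparr>"
  shows "skew_brace B (retract H u) M"
proof -
  interpret M: group "\<lparr>carrier = B, monoid.mult = M, one = u\<rparr>" by (rule brace_type)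
  interpret heap B H using near_truss by unfold_locales (simp add: near_truss_def)
  have u: "u \<in> B" using M.one_closed by simp
  have M_closed: "\<And>x y. \<lbrakk>x \<in> B; y \<in> B\<rbrakk> \<Longrightarrow> M x y \<in> B"
    and M_distrib: "\<And>x y z w. \<lbrakk>x \<in> B; y \<in> B; z \<in> B; w \<in> B\<rbrakk> \<Longrightarrow>
      M x (H y z w) = H (M x y) (M x z) (M x w)"
    using near_truss by (simp_all add: near_truss_def)
  show ?thesis
    unfolding skew_brace_def
  proof (intro exI conjI ballI)
    show "group \<lparr>carrier = B, monoid.mult = retract H u, one = u\<rparr>"
      using u by (rule group_retract)
    fix a b c assume abc: "a \<in> B" "b \<in> B" "c \<in> B"
    have "M a (retract H u b c) = H (M a b) a (M a c)"
      using abc u M.r_one by (simp add: retract_def M_distrib)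
    also have "\<dots> = retract H u (retract H u (M a b)
        (inv\<^bsub>\<lparr>carrier = B, monoid.mult = retract H u, one = u\<rparr>\<^esub> a)) (M a c)"
      using abc u by (subst heap_eq_retract[where e = u]) (simp_all add: M_closed retract_inv)
    finally show "M a (retract H u b c) = retract H u (retract H u (M a b)
        (inv\<^bsub>\<lparr>carrier = B, monoid.mult = retract H u, one = u\<rparr>\<^esub> a)) (M a c)" .
  qed (rule brace_type)
qed

locale left_regular_semigroup =
  fixes A :: "'a set" and m :: "'a \<Rightarrow> 'a \<Rightarrow> 'a"
  assumes mult_closed: "\<lbrakk>x \<in> A; y \<in> A\<rbrakk> \<Longrightarrow> m x y \<in> A"
    and mult_assoc: "\<lbrakk>x \<in> A; y \<in> A; z \<in> A\<rbrakk> \<Longrightarrow> m (m x y) z = m x (m y z)"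
    and left_regular: "left_regular A m"
    and no_absorber: "\<not> (\<exists>z. absorber A m z)"
begin

lemma not_absorber: "\<not> absorber A m x"
  using no_absorber by blast

lemma mult_left_cancel: "\<lbrakk>t \<in> A; x \<in> A; y \<in> A; m t x = m t y\<rbrakk> \<Longrightarrow> x = y"
  using left_regular not_absorber unfolding left_regular_def is_domain_def by blast

lemma mult_right_cancel: "\<lbrakk>t \<in> A; x \<in> A; y \<in> A; m x t = m y t\<rbrakk> \<Longrightarrow> x = y"
  using left_regular not_absorber unfolding left_regular_def is_domain_def by blast

lemma common_left_multiple:
  assumes "x \<in> A" "y \<in> A"
  obtains r s where "r \<in> A" "s \<in> A" "m r x = m s y"
  using assms left_regular not_absorber unfolding left_regular_def by blast

lemma mult_eq_chain:
  assumes in_A: "x \<in> A" "y \<in> A" "z \<in> A" "\<beta> \<in> A" "\<beta>' \<in> A" "\<delta> \<in> A" "\<delta>' \<in> A"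
      "r \<in> A" "s \<in> A"
    and "m \<beta> x = m \<beta>' y" "m \<delta> y = m \<delta>' z" "m r \<beta>' = m s \<delta>"
  shows "m (m r \<beta>) x = m (m s \<delta>') z"
proof -
  have "m (m r \<beta>) x = m (m r \<beta>') y"
    using in_A \<open>m \<beta> x = m \<beta>' y\<close> by (simp add: mult_assoc)
  also have "\<dots> = m (m s \<delta>) y"
    by (simp only: \<open>m r \<beta>' = m s \<delta>\<close>)
  also have "\<dots> = m (m s \<delta>') z"
    using in_A \<open>m \<delta> y = m \<delta>' z\<close> by (simp add: mult_assoc)
  finally show ?thesis .
qed

lemma frac_pairs_iff: "(b, a) \<in> frac_pairs A m \<longleftrightarrow> b \<in> A \<and> a \<in> A"
  by (simp add: frac_pairs_def not_absorber)

lemma frac_rel_iff: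
  "((b, a), (b', a')) \<in> frac_rel A m \<longleftrightarrow> b \<in> A \<and> a \<in> A \<and> b' \<in> A \<and> a' \<in> A \<and>
     (\<exists>\<beta>\<in>A. \<exists>\<beta>'\<in>A. m \<beta> b = m \<beta>' b' \<and> m \<beta> a = m \<beta>' a')"
  by (simp add: frac_rel_def frac_pairs_iff not_absorber)

lemma frac_rel_refl: "\<lbrakk>a \<in> A; b \<in> A\<rbrakk> \<Longrightarrow> ((b, a), (b, a)) \<in> frac_rel A m"
  unfolding frac_rel_iff by blast

text \<open>The multipliers \<gamma>, \<gamma>' agree with the witnesses \<beta>, \<beta>' of the equivalence up to a
  common left factor, by right cancellation of b'.\<close>

lemma frac_rel_equalizes:
  assumes rel: "((b, a), (b', a')) \<in> frac_rel A m"
    and \<gamma>: "\<gamma> \<in> A" "\<gamma>' \<in> A" and den: "m \<gamma> b = m \<gamma>' b'"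
  shows "m \<gamma> a = m \<gamma>' a'"
proof -
  obtain \<beta> \<beta>' where ab: "b \<in> A" "a \<in> A" "b' \<in> A" "a' \<in> A" and \<beta>: "\<beta> \<in> A" "\<beta>' \<in> A"
    and den\<beta>: "m \<beta> b = m \<beta>' b'" and num\<beta>: "m \<beta> a = m \<beta>' a'"
    using rel by (auto simp: frac_rel_iff)
  obtain r s where rs: "r \<in> A" "s \<in> A" and rs_eq: "m r \<gamma> = m s \<beta>"
    using \<gamma>(1) \<beta>(1) by (rule common_left_multiple)
  have "m (m r \<gamma>') b' = m (m s \<beta>') b'"
    by (rule mult_eq_chain[OF ab(3,1,3) \<gamma>(2,1) \<beta> rs den[symmetric] den\<beta> rs_eq])
  then have \<gamma>'_\<beta>': "m r \<gamma>' = m s \<beta>'"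
    by (rule mult_right_cancel[OF ab(3) mult_closed[OF rs(1) \<gamma>(2)] mult_closed[OF rs(2) \<beta>(2)]])
  have "m (m r \<gamma>) a = m (m s \<beta>') a'"
    using rs_eq num\<beta> ab \<beta> rs by (simp add: mult_assoc)
  also have "\<dots> = m (m r \<gamma>') a'"
    by (simp only: \<gamma>'_\<beta>')
  finally have "m r (m \<gamma> a) = m r (m \<gamma>' a')"
    using ab \<gamma> rs by (simp add: mult_assoc)
  then show ?thesis
    by (rule mult_left_cancel[OF rs(1) mult_closed[OF \<gamma>(1) ab(2)] mult_closed[OF \<gamma>(2) ab(4)]])
qed

lemma equiv_frac_rel: "equiv (frac_pairs A m) (frac_rel A m)"
proof (rule equivI)
  show "frac_rel A m \<subseteq> frac_pairs A m \<times> frac_pairs A m"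
    by (auto simp: frac_rel_def)
  show "refl_on (frac_pairs A m) (frac_rel A m)"
    by (rule refl_onI, clarify) (simp add: frac_pairs_iff frac_rel_refl)
  show "sym (frac_rel A m)"
  proof (rule symI, clarify)
    fix b a b' a' assume "((b, a), (b', a')) \<in> frac_rel A m"
    then obtain \<beta> \<beta>' where "b \<in> A" "a \<in> A" "b' \<in> A" "a' \<in> A" "\<beta> \<in> A" "\<beta>' \<in> A"
      "m \<beta> b = m \<beta>' b'" "m \<beta> a = m \<beta>' a'"
      by (auto simp: frac_rel_iff)
    then show "((b', a'), (b, a)) \<in> frac_rel A m"
      unfolding frac_rel_iff by (blast dest: sym)
  qed
  show "trans (frac_rel A m)"
  proof (rule transI, clarify)
    fix b a b' a' b'' a''
    assume "((b, a), (b', a')) \<in> frac_rel A m" "((b', a'), (b'', a'')) \<in> frac_rel A m"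
    then obtain \<beta> \<beta>' \<delta> \<delta>'
      where in_A: "b \<in> A" "a \<in> A" "b' \<in> A" "a' \<in> A" "b'' \<in> A" "a'' \<in> A"
      and \<beta>: "\<beta> \<in> A" "\<beta>' \<in> A" "m \<beta> b = m \<beta>' b'" "m \<beta> a = m \<beta>' a'"
      and \<delta>: "\<delta> \<in> A" "\<delta>' \<in> A" "m \<delta> b' = m \<delta>' b''" "m \<delta> a' = m \<delta>' a''"
      by (auto simp: frac_rel_iff)
    obtain r s where rs: "r \<in> A" "s \<in> A" "m r \<beta>' = m s \<delta>"
      using \<beta>(2) \<delta>(1) by (rule common_left_multiple)
    have "m (m r \<beta>) b = m (m s \<delta>') b''"
      by (rule mult_eq_chain[OF in_A(1,3,5) \<beta>(1,2) \<delta>(1,2) rs(1,2) \<beta>(3) \<delta>(3) rs(3)])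
    moreover have "m (m r \<beta>) a = m (m s \<delta>') a''"
      by (rule mult_eq_chain[OF in_A(2,4,6) \<beta>(1,2) \<delta>(1,2) rs(1,2) \<beta>(4) \<delta>(4) rs(3)])
    moreover have "m r \<beta> \<in> A" "m s \<delta>' \<in> A"
      using rs \<beta> \<delta> by (simp_all add: mult_closed)
    ultimately show "((b, a), (b'', a'')) \<in> frac_rel A m"
      using in_A unfolding frac_rel_iff by blast
  qed
qed

lemma frac_in_Q: "\<lbrakk>a \<in> A; b \<in> A\<rbrakk> \<Longrightarrow> frac A m a b \<in> Q A m"
  unfolding frac_def Q_def by (rule quotientI) (simp add: frac_pairs_iff)

lemma Q_elim:
  assumes "X \<in> Q A m"
  obtains a b where "a \<in> A" "b \<in> A" "X = frac A m a b"
  using assms unfolding Q_def frac_def by (auto elim!: quotientE simp: frac_pairs_iff)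

lemma mem_frac_iff: "(b', a') \<in> frac A m a b \<longleftrightarrow> ((b, a), (b', a')) \<in> frac_rel A m"
  by (simp add: frac_def)

lemma pair_in_frac: "\<lbrakk>a \<in> A; b \<in> A\<rbrakk> \<Longrightarrow> (b, a) \<in> frac A m a b"
  by (simp add: mem_frac_iff frac_rel_refl)

lemma frac_eqI:
  assumes "a \<in> A" "b \<in> A" "a' \<in> A" "b' \<in> A" "\<beta> \<in> A" "\<beta>' \<in> A"
    and "m \<beta> b = m \<beta>' b'" "m \<beta> a = m \<beta>' a'"
  shows "frac A m a b = frac A m a' b'"
  unfolding frac_def using assms
  by (intro equiv_class_eq[OF equiv_frac_rel]) (auto simp: frac_rel_iff)

lemma frac_mult_left: "\<lbrakk>t \<in> A; a \<in> A; b \<in> A\<rbrakk> \<Longrightarrow> frac A m (m t a) (m t b) = frac A m a b"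
  by (rule frac_eqI[where \<beta> = t and \<beta>' = "m t t"]) (simp_all add: mult_closed mult_assoc)

lemma frac_self_eq:
  assumes "b \<in> A" "c \<in> A"
  shows "frac A m b b = frac A m c c"
proof -
  obtain r s where "r \<in> A" "s \<in> A" "m r b = m s c"
    using assms by (rule common_left_multiple)
  then show ?thesis
    using assms by (intro frac_eqI[where \<beta> = r and \<beta>' = s])
qed

lemma Q_elim_denominator_multiple:
  assumes "X \<in> Q A m" "d \<in> A"
  obtains r x where "r \<in> A" "x \<in> A" "X = frac A m x (m r d)"
proof -
  obtain a b where ab: "a \<in> A" "b \<in> A" "X = frac A m a b"
    using assms(1) by (rule Q_elim)
  obtain r s where rs: "r \<in> A" "s \<in> A" "m r d = m s b"
    using assms(2) ab(2) by (rule common_left_multiple)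
  show thesis
    using rs ab by (intro that[of r "m s a"]) (simp_all add: mult_closed frac_mult_left)
qed

lemma Q_elim_numerator_multiple:
  assumes "X \<in> Q A m" "q \<in> A"
  obtains t p where "t \<in> A" "p \<in> A" "X = frac A m (m t q) p"
proof -
  obtain a b where ab: "a \<in> A" "b \<in> A" "X = frac A m a b"
    using assms(1) by (rule Q_elim)
  obtain t s where ts: "t \<in> A" "s \<in> A" "m t q = m s a"
    using assms(2) ab(1) by (rule common_left_multiple)
  show thesis
    using ts ab by (intro that[of t "m s b"]) (simp_all add: mult_closed frac_mult_left)
qed

lemma Q_common_denominator:
  assumes "finite S" "S \<noteq> {}" "S \<subseteq> Q A m"
  shows "\<exists>d\<in>A. \<forall>X\<in>S. \<exists>x\<in>A. X = frac A m x d"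
  using assms
proof (induction S rule: finite_ne_induct)
  case (singleton X)
  then have "X \<in> Q A m" by simp
  then obtain a b where "a \<in> A" "b \<in> A" "X = frac A m a b"
    by (rule Q_elim)
  then show ?case by blast
next
  case (insert X S)
  then obtain d where d: "d \<in> A" and S: "\<forall>Y\<in>S. \<exists>y\<in>A. Y = frac A m y d"
    by auto
  have "X \<in> Q A m" using insert.prems by simp
  then obtain r x where r: "r \<in> A" and X: "x \<in> A" "X = frac A m x (m r d)"
    using d by (rule Q_elim_denominator_multiple)
  have "\<forall>Y\<in>S. \<exists>y\<in>A. Y = frac A m y (m r d)"
  proof
    fix Y assume "Y \<in> S"
    then obtain y where "y \<in> A" "Y = frac A m y d"
      using S by blast
    then show "\<exists>y\<in>A. Y = frac A m y (m r d)"
      using r d by (intro bexI[of _ "m r y"]) (simp_all add: frac_mult_left mult_closed)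
  qed
  then show ?case
    using X r d by (intro bexI[of _ "m r d"]) (auto simp: mult_closed)
qed

text \<open>By Q_elim_numerator_multiple any two fractions have the form tc/p and te/tc, so this
  telescoping instance of the multiplication formula is the only one needed.\<close>

lemma Q_mul_telescope:
  assumes cde: "c \<in> A" "d \<in> A" "e \<in> A"
  shows "Q_mul A m (frac A m c d) (frac A m e c) = frac A m e d"
  unfolding Q_mul_def
proof (rule the_equality, goal_cases)
  case 1
  have "frac A m e d = frac A m (m d e) (m d d)"
    using cde by (simp add: frac_mult_left)
  then show ?case
    using cde pair_in_frac by blast
next
  case (2 W)
  then obtain d' c' c'' e' \<gamma> \<gamma>' where rel_cd: "((d, c), (d', c')) \<in> frac_rel A m"
    and rel_ec: "((c, e), (c'', e')) \<in> frac_rel A m" and \<gamma>: "\<gamma> \<in> A" "\<gamma>' \<in> A"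
    and \<gamma>_eq: "m \<gamma> c'' = m \<gamma>' c'" and W: "W = frac A m (m \<gamma> e') (m \<gamma>' d')"
    by (auto simp: mem_frac_iff)
  have in_A: "d' \<in> A" "c' \<in> A" "c'' \<in> A" "e' \<in> A"
    using rel_cd rel_ec by (auto simp: frac_rel_iff)
  obtain r s where rs: "r \<in> A" "s \<in> A" and rs_eq: "m r (m \<gamma>' d') = m s d"
    using mult_closed[OF \<gamma>(2) in_A(1)] cde(2) by (rule common_left_multiple)
  have "m s d = m (m r \<gamma>') d'"
    using rs_eq rs \<gamma> in_A by (simp add: mult_assoc)
  then have "m s c = m (m r \<gamma>') c'"
    by (rule frac_rel_equalizes[OF rel_cd rs(2) mult_closed[OF rs(1) \<gamma>(2)]])
  also have "\<dots> = m (m r \<gamma>) c''"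
    using \<gamma>_eq rs \<gamma> in_A by (simp add: mult_assoc)
  finally have "m s e = m (m r \<gamma>) e'"
    by (rule frac_rel_equalizes[OF rel_ec rs(2) mult_closed[OF rs(1) \<gamma>(1)]])
  then have "m r (m \<gamma> e') = m s e"
    using rs \<gamma> in_A by (simp add: mult_assoc)
  then show ?case
    unfolding W using rs_eq rs \<gamma> in_A cde
    by (intro frac_eqI[where \<beta> = r and \<beta>' = s]) (simp_all add: mult_closed)
qed

lemma Q_mul_closed:
  assumes "X \<in> Q A m" "Y \<in> Q A m"
  shows "Q_mul A m X Y \<in> Q A m"
proof -
  obtain e c where ec: "e \<in> A" "c \<in> A" "Y = frac A m e c"
    using assms(2) by (rule Q_elim)
  obtain t p where tp: "t \<in> A" "p \<in> A" "X = frac A m (m t c) p"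
    using assms(1) ec(2) by (rule Q_elim_numerator_multiple)
  have "Y = frac A m (m t e) (m t c)"
    using ec tp by (simp add: frac_mult_left)
  then show ?thesis
    using tp ec by (simp add: Q_mul_telescope mult_closed frac_in_Q)
qed

lemma Q_mul_assoc:
  assumes "X \<in> Q A m" "Y \<in> Q A m" "Z \<in> Q A m"
  shows "Q_mul A m (Q_mul A m X Y) Z = Q_mul A m X (Q_mul A m Y Z)"
proof -
  obtain e c where ec: "e \<in> A" "c \<in> A" "Z = frac A m e c"
    using assms(3) by (rule Q_elim)
  obtain t p where tp: "t \<in> A" "p \<in> A" "Y = frac A m (m t c) p"
    using assms(2) ec(2) by (rule Q_elim_numerator_multiple)
  obtain u w where uw: "u \<in> A" "w \<in> A" "X = frac A m (m u p) w"
    using assms(1) tp(2) by (rule Q_elim_numerator_multiple)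
  have "Z = frac A m (m u (m t e)) (m u (m t c))" "Y = frac A m (m u (m t c)) (m u p)"
    using ec tp uw by (simp_all add: frac_mult_left mult_closed)
  then show ?thesis
    unfolding uw(3) using ec(1,2) tp(1,2) uw(1,2) by (simp add: Q_mul_telescope mult_closed)
qed

lemma Q_mul_group:
  assumes b: "b \<in> A"
  shows "group \<lparr>carrier = Q A m, monoid.mult = Q_mul A m, one = frac A m b b\<rparr>"
proof (rule groupI; simp add: b frac_in_Q Q_mul_closed Q_mul_assoc)
  fix X assume "X \<in> Q A m"
  then obtain a c where ac: "a \<in> A" "c \<in> A" "X = frac A m a c"
    by (rule Q_elim)
  show "Q_mul A m (frac A m b b) X = X"
    using ac frac_self_eq[OF b ac(2)] by (simp add: Q_mul_telescope)
  show "\<exists>Y\<in>Q A m. Q_mul A m Y X = frac A m b b"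
    using ac frac_self_eq[OF b ac(1)]
    by (intro bexI[of _ "frac A m c a"]) (simp_all add: Q_mul_telescope frac_in_Q)
qed

end

locale left_regular_near_truss = left_regular_semigroup A m
  for A :: "'a set" and m :: "'a \<Rightarrow> 'a \<Rightarrow> 'a" +
  fixes h :: "'a \<Rightarrow> 'a \<Rightarrow> 'a \<Rightarrow> 'a"
  assumes near_truss: "near_truss A h m"
begin

sublocale heap A h
  using near_truss by unfold_locales (simp add: near_truss_def)

lemma mult_heap_distrib:
  "\<lbrakk>x \<in> A; y \<in> A; z \<in> A; w \<in> A\<rbrakk> \<Longrightarrow> m x (h y z w) = h (m x y) (m x z) (m x w)"
  using near_truss by (simp add: near_truss_def)

lemma Q_heap_common_denominator:
  assumes x: "x1 \<in> A" "x2 \<in> A" "x3 \<in> A" and d: "d \<in> A"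
  shows "Q_heap A h m (frac A m x1 d) (frac A m x2 d) (frac A m x3 d) = frac A m (h x1 x2 x3) d"
  unfolding Q_heap_def
proof (rule the_equality, goal_cases)
  case 1
  have "frac A m (h x1 x2 x3) d = frac A m (h (m d x1) (m d x2) (m d x3)) (m d d)"
    using x d by (simp add: mult_heap_distrib[symmetric] frac_mult_left heap_closed)
  with x d have "(d, x1) \<in> frac A m x1 d \<and> (d, x2) \<in> frac A m x2 d \<and> (d, x3) \<in> frac A m x3 d \<and>
      d \<in> A \<and> d \<in> A \<and> d \<in> A \<and> \<not> absorber A m d \<and> \<not> absorber A m d \<and> \<not> absorber A m d \<and>
      m d d = m d d \<and> m d d = m d d \<and>
      frac A m (h x1 x2 x3) d = frac A m (h (m d x1) (m d x2) (m d x3)) (m d d)"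
    by (simp add: pair_in_frac not_absorber)
  then show ?case
    by (intro exI)
next
  case (2 W)
  then obtain c1 d1 c2 d2 c3 d3 \<delta>1 \<delta>2 \<delta>3 where rel: "((d, x1), (c1, d1)) \<in> frac_rel A m"
      "((d, x2), (c2, d2)) \<in> frac_rel A m" "((d, x3), (c3, d3)) \<in> frac_rel A m"
    and \<delta>: "\<delta>1 \<in> A" "\<delta>2 \<in> A" "\<delta>3 \<in> A"
    and den: "m \<delta>1 c1 = m \<delta>2 c2" "m \<delta>2 c2 = m \<delta>3 c3"
    and W: "W = frac A m (h (m \<delta>1 d1) (m \<delta>2 d2) (m \<delta>3 d3)) (m \<delta>1 c1)"
    by (auto simp: mem_frac_iff)
  have in_A: "c1 \<in> A" "d1 \<in> A" "d2 \<in> A" "d3 \<in> A"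
    using rel by (auto simp: frac_rel_iff)
  obtain r s where rs: "r \<in> A" "s \<in> A" and rs_eq: "m r (m \<delta>1 c1) = m s d"
    using mult_closed[OF \<delta>(1) in_A(1)] d by (rule common_left_multiple)
  have num: "m s x = m r (m \<delta> d')"
    if rel_x: "((d, x), (c, d')) \<in> frac_rel A m" and "\<delta> \<in> A" and "m \<delta> c = m \<delta>1 c1"
    for x c d' \<delta>
  proof -
    have "c \<in> A" "d' \<in> A" using rel_x by (auto simp: frac_rel_iff)
    then have "m s d = m (m r \<delta>) c"
      using rs_eq rs \<open>\<delta> \<in> A\<close> \<open>m \<delta> c = m \<delta>1 c1\<close> by (simp add: mult_assoc)
    then have "m s x = m (m r \<delta>) d'"
      by (rule frac_rel_equalizes[OF rel_x rs(2) mult_closed[OF rs(1) \<open>\<delta> \<in> A\<close>]])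
    then show ?thesis
      using rs \<open>\<delta> \<in> A\<close> \<open>d' \<in> A\<close> by (simp add: mult_assoc)
  qed
  have "m s (h x1 x2 x3) = m r (h (m \<delta>1 d1) (m \<delta>2 d2) (m \<delta>3 d3))"
    using num[OF rel(1) \<delta>(1)] num[OF rel(2) \<delta>(2)] num[OF rel(3) \<delta>(3)] den x rs \<delta> in_A
    by (simp add: mult_heap_distrib mult_closed)
  then show ?case
    unfolding W using rs rs_eq x d \<delta> in_A
    by (intro frac_eqI[where \<beta> = r and \<beta>' = s]) (simp_all add: mult_closed heap_closed)
qed

lemma Q_heap_closed:
  assumes "X \<in> Q A m" "Y \<in> Q A m" "Z \<in> Q A m"
  shows "Q_heap A h m X Y Z \<in> Q A m"
proof -
  obtain d x y z where "d \<in> A" "x \<in> A" "y \<in> A" "z \<in> A"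
    and "X = frac A m x d" "Y = frac A m y d" "Z = frac A m z d"
    using Q_common_denominator[of "{X, Y, Z}"] assms by auto
  then show ?thesis
    by (simp add: Q_heap_common_denominator heap_closed frac_in_Q)
qed

lemma Q_heap_assoc:
  assumes "X1 \<in> Q A m" "X2 \<in> Q A m" "X3 \<in> Q A m" "X4 \<in> Q A m" "X5 \<in> Q A m"
  shows "Q_heap A h m X1 X2 (Q_heap A h m X3 X4 X5) = Q_heap A h m (Q_heap A h m X1 X2 X3) X4 X5"
proof -
  obtain d x1 x2 x3 x4 x5 where "d \<in> A" "x1 \<in> A" "x2 \<in> A" "x3 \<in> A" "x4 \<in> A" "x5 \<in> A"
    and "X1 = frac A m x1 d" "X2 = frac A m x2 d" "X3 = frac A m x3 d"
      "X4 = frac A m x4 d" "X5 = frac A m x5 d"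
    using Q_common_denominator[of "{X1, X2, X3, X4, X5}"] assms by auto
  then show ?thesis
    by (simp add: Q_heap_common_denominator heap_closed heap_assoc)
qed

lemma Q_heap_cancel:
  assumes "X \<in> Q A m" "Y \<in> Q A m"
  shows "Q_heap A h m X X Y = Y" "Q_heap A h m Y X X = Y"
proof -
  obtain d x y where "d \<in> A" "x \<in> A" "y \<in> A" "X = frac A m x d" "Y = frac A m y d"
    using Q_common_denominator[of "{X, Y}"] assms by auto
  then show "Q_heap A h m X X Y = Y" "Q_heap A h m Y X X = Y"
    by (simp_all add: Q_heap_common_denominator heap_cancel_left heap_cancel_right)
qed

lemma Q_mul_heap_distrib:
  assumes X: "X \<in> Q A m" and Y: "Y1 \<in> Q A m" "Y2 \<in> Q A m" "Y3 \<in> Q A m"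
  shows "Q_mul A m X (Q_heap A h m Y1 Y2 Y3) =
    Q_heap A h m (Q_mul A m X Y1) (Q_mul A m X Y2) (Q_mul A m X Y3)"
proof -
  obtain d y1 y2 y3 where y: "y1 \<in> A" "y2 \<in> A" "y3 \<in> A" and d: "d \<in> A"
    and Y_eq: "Y1 = frac A m y1 d" "Y2 = frac A m y2 d" "Y3 = frac A m y3 d"
    using Q_common_denominator[of "{Y1, Y2, Y3}"] Y by auto
  obtain t p where tp: "t \<in> A" "p \<in> A" and X_eq: "X = frac A m (m t d) p"
    using X d by (rule Q_elim_numerator_multiple)
  have Y_eq': "Y1 = frac A m (m t y1) (m t d)" "Y2 = frac A m (m t y2) (m t d)"
      "Y3 = frac A m (m t y3) (m t d)"
    using Y_eq y d tp by (simp_all add: frac_mult_left)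
  have "Q_mul A m X (Q_heap A h m Y1 Y2 Y3) = frac A m (m t (h y1 y2 y3)) p"
    unfolding X_eq Y_eq' using y d tp
    by (simp add: Q_heap_common_denominator mult_closed heap_closed Q_mul_telescope mult_heap_distrib)
  also have "\<dots> = Q_heap A h m (Q_mul A m X Y1) (Q_mul A m X Y2) (Q_mul A m X Y3)"
    unfolding X_eq Y_eq' using y d tp
    by (simp add: Q_heap_common_denominator mult_closed Q_mul_telescope mult_heap_distrib)
  finally show ?thesis .
qed

lemma Q_near_truss: "near_truss (Q A m) (Q_heap A h m) (Q_mul A m)"
  unfolding near_truss_def is_heap_def
  by (simp add: Q_heap_closed Q_heap_assoc Q_heap_cancel Q_mul_closed Q_mul_assoc Q_mul_heap_distrib)

end

theorem corollary5p5:
  fixes A :: "'a set" and h :: "'a \<Rightarrow> 'a \<Rightarrow> 'a \<Rightarrow> 'a" and m :: "'a \<Rightarrow> 'a \<Rightarrow> 'a"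
  assumes "near_truss A h m"
    and "left_regular A m"
    and "\<not> (\<exists>z. absorber A m z)"
  shows "near_truss (Q A m) (Q_heap A h m) (Q_mul A m) \<and>
         (\<forall>b\<in>A. skew_brace (Q A m) (retract (Q_heap A h m) (frac A m b b)) (Q_mul A m))"
proof -
  interpret left_regular_near_truss A m h
    using assms by unfold_locales (simp_all add: near_truss_def)
  show ?thesis
  proof (intro conjI ballI)
    show "near_truss (Q A m) (Q_heap A h m) (Q_mul A m)"
      by (rule Q_near_truss)
    fix b assume "b \<in> A"
    with Q_near_truss show "skew_brace (Q A m) (retract (Q_heap A h m) (frac A m b b)) (Q_mul A m)"
      by (intro skew_brace_of_brace_type_near_truss Q_mul_group)
  qed
qed

end
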